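(* For all integers $m\ge1$ and $r\ge0$: (i) for all $n,k\ge0$, $W_{m,r}(n+1,k+1)=\sum_{j\ge0}\frac{n+1}{k+1}\binom{k+j}{j}c_j\,m^j\,W_{m,r}(n,k+j)$ (a finite sum since $W_{m,r}(n,i)=0$ for $i>n$); (ii) for all $n\ge1$ and $1\le k\le n$, $W_{m,r}(n,k)-rW_{m,r}(n-1,k)=\sum_{l=k}^n\binom{n-1}{l-1}m^{n-l}W_{m,r}(l-1,k-1)$; (iii) for all $n\ge1$ and $1\le k\le n$, $k\,W_{m,r}(n,k)=\sum_{l=k}^n\binom{n}{l-1}m^{n-l}W_{m,r}(l-1,k-1)$.
   Context: For integers $m\ge1$, $n,k,r\ge0$, $W_{m,r}(n,k)$ denotes the $r$-Whitney number of the second kind, defined by $\sum_{n\ge k}W_{m,r}(n,k)\frac{z^n}{n!}=\frac{e^{rz}}{k!}\left(\frac{e^{mz}-1}{m}\right)^k$ (and $W_{m,r}(n,k)=0$ for $k>n$). The Cauchy numbers of the first kind are $c_n=\int_0^1x(x-1)\cdots(x-n+1)\,dx$, equivalently $\frac{t}{\ln(1+t)}=\sum_{n\ge0}c_n\frac{t^n}{n!}$. *)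

theory Defs
  imports "HOL-Analysis.Analysis" "HOL-Computational_Algebra.Formal_Power_Series"
begin

definition whitney2 :: "nat \<Rightarrow> nat \<Rightarrow> nat \<Rightarrow> nat \<Rightarrow> real" where
  "whitney2 m r n k =
     fact n * fps_nth (fps_const (1 / fact k) * fps_exp (real r)
        * (fps_const (1 / real m) * (fps_exp (real m) - 1)) ^ k) n"

definition cauchy1 :: "nat \<Rightarrow> real" where
  "cauchy1 n = integral {0..1} (\<lambda>x::real. \<Prod>i<n. (x - real i))"

end

theory Submission
  imports Defs
begin

text \<open>Let F_k = e^(rz) U^k / k! with U = (e^(mz) - 1)/m be the exponential generating function
  of W(-,k). Then (k+1) F_(k+1) = F_k U and F_(k+1)' = r F_(k+1) + F_k e^(mz); reading off
  coefficients of these products as binomial convolutions gives (iii) and (ii).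
  For (i), expand e^(mxz) = (1 + (e^(mz) - 1))^x = sum_j (x choose j) (e^(mz) - 1)^j. Comparing
  coefficients of z^n in F_k e^(mxz) gives a polynomial identity in x between falling factorials
  weighted by W(n,k+j) and powers x^(n-i) weighted by W(i,k). Integrating over [0,1] turns the
  falling factorials into Cauchy numbers and x^(n-i) into 1/(n-i+1), which is exactly what the
  coefficient of z^(n+1) in F_k U produces.\<close>

lemma fps_binomial_ODE:
  "(1 + fps_X) * fps_deriv (fps_binomial c) = fps_const (c :: 'a :: field_char_0) * fps_binomial c"
proof -
  have "(1 + fps_X) * inverse (1 + fps_X :: 'a fps) = 1"
    by (subst mult.commute, rule inverse_mult_eq_1) simp
  then show ?thesis by (simp add: fps_binomial_deriv fps_divide_def mult_ac)
qed

lemma fps_binomial_compose_exp_minus_one: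
  "fps_binomial x oo (fps_exp c - 1) = fps_exp (c * x :: 'a :: field_char_0)"
proof -
  let ?E = "fps_exp c - 1 :: 'a fps"
  let ?G = "fps_binomial x oo ?E"
  have E0: "fps_nth ?E 0 = 0" by simp
  have "fps_deriv ?G = (fps_deriv (fps_binomial x) oo ?E) * (fps_const c * ((1 + fps_X) oo ?E))"
    by (simp add: fps_compose_deriv[OF E0] fps_compose_add_distrib)
  also have "\<dots> = fps_const c * (((1 + fps_X) * fps_deriv (fps_binomial x)) oo ?E)"
    by (simp add: fps_compose_mult_distrib[OF E0] mult_ac)
  also have "\<dots> = fps_const (c * x) * ?G"
    by (simp only: fps_binomial_ODE) (simp add: fps_compose_mult_distrib[OF E0] mult_ac)
  finally have "?G = fps_const (fps_nth ?G 0) * fps_exp (c * x)"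
    using fps_exp_unique_ODE by blast
  then show ?thesis by simp
qed

lemma fps_exp_nth_eq_binomial_sum:
  assumes "t \<le> n"
  shows "fps_nth (fps_exp (c * x)) t = fps_nth (\<Sum>j\<le>n. fps_const (x gchoose j) * (fps_exp c - 1) ^ j) t"
proof -
  have E0: "fps_nth (fps_exp c - 1 :: 'a :: field_char_0 fps) 0 = 0" by simp
  have "fps_nth (fps_exp (c * x)) t = (\<Sum>j=0..t. (x gchoose j) * fps_nth ((fps_exp c - 1) ^ j) t)"
    by (simp add: fps_binomial_compose_exp_minus_one[symmetric] fps_compose_nth)
  also have "\<dots> = (\<Sum>j\<le>n. (x gchoose j) * fps_nth ((fps_exp c - 1) ^ j) t)"
    by (rule sum.mono_neutral_left)
       (use assms startsby_zero_power_prefix[OF E0] in auto)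
  finally show ?thesis by (simp add: fps_sum_nth)
qed

lemma fact_mult_fps_mult_nth:
  "fact n * fps_nth (f * g) n =
   (\<Sum>i\<le>n. of_nat (n choose i) * (fact i * fps_nth f i) * (fact (n - i) * fps_nth g (n - i) :: 'a :: field_char_0))"
proof -
  have "fact n * (fps_nth f i * fps_nth g (n - i)) =
        of_nat (n choose i) * (fact i * fps_nth f i) * (fact (n - i) * fps_nth g (n - i) :: 'a)"
    if "i \<le> n" for i
    using that by (simp add: binomial_fact)
  then show ?thesis
    unfolding fps_mult_nth atLeast0AtMost sum_distrib_left by (intro sum.cong) auto
qed

lemma has_integral_power_unit_interval:
  "((\<lambda>x::real. x ^ d) has_integral 1 / real (Suc d)) {0..1}"
proof -
  have "((\<lambda>x::real. x ^ d) has_integral 1 ^ Suc d / real (Suc d) - 0 ^ Suc d / real (Suc d)) {0..1}"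
  proof (rule fundamental_theorem_of_calculus)
    fix x :: real
    have "((\<lambda>x. x ^ Suc d / real (Suc d)) has_real_derivative x ^ d) (at x within {0..1})"
      by (rule derivative_eq_intros refl | simp del: of_nat_Suc)+
    then show "((\<lambda>x. x ^ Suc d / real (Suc d)) has_vector_derivative x ^ d) (at x within {0..1})"
      by (simp add: has_real_derivative_iff_has_vector_derivative)
  qed simp
  then show ?thesis by simp
qed

lemma has_integral_cauchy1: "((\<lambda>x::real. \<Prod>i<j. x - real i) has_integral cauchy1 j) {0..1}"
  unfolding cauchy1_def
  by (rule integrable_integral, rule integrable_continuous_real, intro continuous_intros)

text \<open>For \<open>m = 0\<close> this is \<open>0\<close> (since \<open>1/0 = 0\<close>), which is why most lemmas below assume \<open>m \<ge> 1\<close>.\<close>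

definition scaled_exp_minus_one :: "nat \<Rightarrow> real fps" where
  "scaled_exp_minus_one m = fps_const (1 / real m) * (fps_exp (real m) - 1)"

definition whitney_egf :: "nat \<Rightarrow> nat \<Rightarrow> nat \<Rightarrow> real fps" where
  "whitney_egf m r k = fps_const (1 / fact k) * fps_exp (real r) * scaled_exp_minus_one m ^ k"

lemma whitney2_eq_egf: "whitney2 m r n k = fact n * fps_nth (whitney_egf m r k) n"
  by (simp add: whitney2_def whitney_egf_def scaled_exp_minus_one_def)

lemma exp_minus_one_eq_scaled:
  "m \<ge> 1 \<Longrightarrow> fps_exp (real m) - 1 = fps_const (real m) * scaled_exp_minus_one m"
  by (simp add: scaled_exp_minus_one_def mult.assoc[symmetric] fps_const_mult[symmetric]
           del: fps_const_mult)

lemma fps_deriv_scaled_exp_minus_one: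
  "m \<ge> 1 \<Longrightarrow> fps_deriv (scaled_exp_minus_one m) = fps_exp (real m)"
  by (simp add: scaled_exp_minus_one_def fps_const_mult[symmetric] mult.assoc[symmetric]
           del: fps_const_mult)

lemma scaled_exp_minus_one_nth_0: "fps_nth (scaled_exp_minus_one m) 0 = 0"
  by (simp add: scaled_exp_minus_one_def)

lemma fact_nth_scaled_exp_minus_one:
  "m \<ge> 1 \<Longrightarrow> fact (Suc n) * fps_nth (scaled_exp_minus_one m) (Suc n) = real m ^ n"
  by (simp add: scaled_exp_minus_one_def del: fact_Suc)

lemma whitney_egf_nth_eq_0:
  assumes "n < k"
  shows "fps_nth (whitney_egf m r k) n = 0"
proof -
  have "fps_nth (scaled_exp_minus_one m ^ k) j = 0" if "j \<le> n" for j
    using startsby_zero_power_prefix[OF scaled_exp_minus_one_nth_0] that assms by fastforce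
  then show ?thesis
    unfolding whitney_egf_def by (simp add: fps_mult_nth mult.assoc)
qed

lemma whitney2_eq_0: "n < k \<Longrightarrow> whitney2 m r n k = 0"
  by (simp add: whitney2_eq_egf whitney_egf_nth_eq_0)

lemma whitney_egf_Suc:
  "fps_const (real (Suc k)) * whitney_egf m r (Suc k) = whitney_egf m r k * scaled_exp_minus_one m"
  unfolding whitney_egf_def
  by (simp add: fps_const_mult[symmetric] mult_ac del: fps_const_mult)

lemma fps_deriv_whitney_egf:
  assumes "m \<ge> 1"
  shows "fps_deriv (whitney_egf m r (Suc k)) =
         fps_const (real r) * whitney_egf m r (Suc k) + whitney_egf m r k * fps_exp (real m)"
proof -
  have "fact k + fact k * real k = fact k * (1 + real k)"
    by (simp add: algebra_simps)
  moreover have "fact k * (1 + real k) \<noteq> 0"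
    by (simp add: add_pos_nonneg)
  ultimately have "(1 + real k) / (fact k + fact k * real k) = 1 / (fact k :: real)"
    by simp
  then show ?thesis
    unfolding whitney_egf_def
    by (simp add: fps_deriv_power fps_deriv_scaled_exp_minus_one[OF assms] algebra_simps
                  fps_const_mult[symmetric] del: fps_const_mult power_Suc)
qed

lemma whitney_egf_mult_exp_minus_one_power:
  assumes "m \<ge> 1"
  shows "whitney_egf m r k * (fps_exp (real m) - 1) ^ j =
         fps_const (real m ^ j * fact (k + j) / fact k) * whitney_egf m r (k + j)"
proof -
  have "fps_const (1 / fact k) * fps_const (real m ^ j) =
        fps_const (real m ^ j * fact (k + j) / fact k) * (fps_const (1 / fact (k + j)) :: real fps)"
    by (simp add: fps_const_mult[symmetric] del: fps_const_mult)
  then show ?thesis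
    unfolding exp_minus_one_eq_scaled[OF assms] whitney_egf_def power_mult_distrib fps_const_power
      power_add
    by (simp add: mult_ac)
qed

lemma whitney2_Suc_right:
  assumes "m \<ge> 1"
  shows "real (Suc k) * whitney2 m r n (Suc k) =
         (\<Sum>i<n. real (n choose i) * real m ^ (n - Suc i) * whitney2 m r i k)"
proof -
  have "real (Suc k) * whitney2 m r n (Suc k) =
        fact n * fps_nth (whitney_egf m r k * scaled_exp_minus_one m) n"
    by (simp add: whitney2_eq_egf whitney_egf_Suc[symmetric] del: of_nat_Suc)
  also have "\<dots> = (\<Sum>i<Suc n. real (n choose i) * whitney2 m r i k *
                     (fact (n - i) * fps_nth (scaled_exp_minus_one m) (n - i)))"
    unfolding fact_mult_fps_mult_nth whitney2_eq_egf lessThan_Suc_atMost ..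
  also have "\<dots> = (\<Sum>i<n. real (n choose i) * real m ^ (n - Suc i) * whitney2 m r i k)"
  proof -
    have "fact (n - i) * fps_nth (scaled_exp_minus_one m) (n - i) = real m ^ (n - Suc i)" if "i < n" for i
      using fact_nth_scaled_exp_minus_one[OF assms, of "n - Suc i"] that by (simp add: Suc_diff_Suc)
    then have "(\<Sum>i<n. real (n choose i) * whitney2 m r i k *
                  (fact (n - i) * fps_nth (scaled_exp_minus_one m) (n - i))) =
               (\<Sum>i<n. real (n choose i) * real m ^ (n - Suc i) * whitney2 m r i k)"
      by (intro sum.cong) simp_all
    then show ?thesis
      by (simp add: scaled_exp_minus_one_nth_0)
  qed
  finally show ?thesis .
qed

lemma whitney2_Suc_diff:
  assumes "m \<ge> 1"
  shows "whitney2 m r (Suc n) (Suc k) - real r * whitney2 m r n (Suc k) =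
         (\<Sum>i\<le>n. real (n choose i) * real m ^ (n - i) * whitney2 m r i k)"
proof -
  have "whitney2 m r (Suc n) (Suc k) - real r * whitney2 m r n (Suc k) =
        fact n * fps_nth (fps_deriv (whitney_egf m r (Suc k)) - fps_const (real r) * whitney_egf m r (Suc k)) n"
    by (simp add: whitney2_eq_egf algebra_simps)
  also have "\<dots> = fact n * fps_nth (whitney_egf m r k * fps_exp (real m)) n"
    by (simp add: fps_deriv_whitney_egf[OF assms] del: fps_deriv_nth)
  also have "\<dots> = (\<Sum>i\<le>n. real (n choose i) * real m ^ (n - i) * whitney2 m r i k)"
    unfolding fact_mult_fps_mult_nth by (simp add: whitney2_eq_egf mult_ac)
  finally show ?thesis .
qed

lemma whitney2_falling_factorial_sum:
  assumes "m \<ge> 1"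
  shows "(\<Sum>j\<le>n. real ((k + j) choose j) * (\<Prod>i<j. x - real i) * real m ^ j * whitney2 m r n (k + j)) =
         (\<Sum>i\<le>n. real (n choose i) * real m ^ (n - i) * whitney2 m r i k * x ^ (n - i))"
proof -
  define E where "E = fps_exp (real m) - 1"
  have "fps_nth (whitney_egf m r k * fps_exp (real m * x)) n =
        fps_nth (whitney_egf m r k * (\<Sum>j\<le>n. fps_const (x gchoose j) * E ^ j)) n"
    unfolding fps_mult_nth E_def
    by (intro sum.cong refl arg_cong2[where f = "(*)"] fps_exp_nth_eq_binomial_sum) auto
  also have "whitney_egf m r k * (\<Sum>j\<le>n. fps_const (x gchoose j) * E ^ j) =
      (\<Sum>j\<le>n. fps_const ((x gchoose j) * real m ^ j * fact (k + j) / fact k) * whitney_egf m r (k + j))"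
    unfolding sum_distrib_left E_def
    by (intro sum.cong refl)
       (simp add: whitney_egf_mult_exp_minus_one_power[OF assms] mult_ac fps_const_mult[symmetric]
             del: fps_const_mult)
  finally have egf_left: "fact n * fps_nth (whitney_egf m r k * fps_exp (real m * x)) n =
      (\<Sum>j\<le>n. (x gchoose j) * fact (k + j) / fact k * real m ^ j * whitney2 m r n (k + j))"
    by (simp add: fps_sum_nth sum_distrib_left whitney2_eq_egf mult_ac)
  have falling_factorial:
    "(x gchoose j) * fact (k + j) / fact k = real ((k + j) choose j) * (\<Prod>i<j. x - real i)" for j
  proof -
    have "fact (k + j) = fact j * fact k * (real ((k + j) choose j))"
      by (simp add: binomial_fact)
    moreover have "fact j * (x gchoose j) = (\<Prod>i<j. x - real i)"
      by (simp add: gbinomial_prod_rev lessThan_atLeast0)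
    ultimately show ?thesis by (simp add: field_simps)
  qed
  have "(\<Sum>j\<le>n. real ((k + j) choose j) * (\<Prod>i<j. x - real i) * real m ^ j * whitney2 m r n (k + j)) =
      fact n * fps_nth (whitney_egf m r k * fps_exp (real m * x)) n"
    by (simp only: egf_left falling_factorial)
  also have "\<dots> = (\<Sum>i\<le>n. real (n choose i) * real m ^ (n - i) * whitney2 m r i k * x ^ (n - i))"
    unfolding fact_mult_fps_mult_nth by (simp add: whitney2_eq_egf power_mult_distrib mult_ac)
  finally show ?thesis .
qed

lemma whitney2_cauchy_sum:
  assumes "m \<ge> 1"
  shows "(\<Sum>j\<le>n. real ((k + j) choose j) * cauchy1 j * real m ^ j * whitney2 m r n (k + j)) =
         (\<Sum>i\<le>n. real (n choose i) * real m ^ (n - i) * whitney2 m r i k / real (Suc (n - i)))"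
proof (rule has_integral_unique)
  let ?f = "\<lambda>x. \<Sum>j\<le>n. real ((k + j) choose j) * (\<Prod>i<j. x - real i) * real m ^ j * whitney2 m r n (k + j)"
  show "(?f has_integral (\<Sum>j\<le>n. real ((k + j) choose j) * cauchy1 j * real m ^ j * whitney2 m r n (k + j))) {0..1}"
    by (intro has_integral_sum finite_atMost has_integral_mult_left has_integral_mult_right has_integral_cauchy1)
  have "((\<lambda>x. \<Sum>i\<le>n. real (n choose i) * real m ^ (n - i) * whitney2 m r i k * x ^ (n - i)) has_integral
        (\<Sum>i\<le>n. real (n choose i) * real m ^ (n - i) * whitney2 m r i k * (1 / real (Suc (n - i))))) {0..1}"
    by (intro has_integral_sum finite_atMost has_integral_mult_right has_integral_power_unit_interval)
  then show "(?f has_integral (\<Sum>i\<le>n. real (n choose i) * real m ^ (n - i) * whitney2 m r i k / real (Suc (n - i)))) {0..1}"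
    by (simp add: whitney2_falling_factorial_sum[OF assms])
qed

lemma whitney2_Suc_Suc_eq_cauchy_sum:
  assumes "m \<ge> 1"
  shows "whitney2 m r (n + 1) (k + 1) =
         (\<Sum>j\<le>n. real (n + 1) / real (k + 1) * real ((k + j) choose j) * cauchy1 j
                   * real m ^ j * whitney2 m r n (k + j))"
proof -
  let ?S = "\<Sum>j\<le>n. real ((k + j) choose j) * cauchy1 j * real m ^ j * whitney2 m r n (k + j)"
  have binomial: "real (Suc n choose i) = real (Suc n) * real (n choose i) / real (Suc (n - i))"
    if "i \<le> n" for i
  proof -
    have "Suc (n - i) * (Suc n choose i) = Suc n * (n choose i)"
      using binomial_absorb_comp[of "Suc n" i] that by (simp add: Suc_diff_le)
    then have "real (Suc (n - i)) * real (Suc n choose i) = real (Suc n) * real (n choose i)"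
      by (metis of_nat_mult)
    then show ?thesis
      by (simp add: eq_divide_eq mult.commute del: of_nat_Suc)
  qed
  have "real (Suc k) * whitney2 m r (Suc n) (Suc k) =
        (\<Sum>i\<le>n. real (Suc n choose i) * real m ^ (n - i) * whitney2 m r i k)"
    by (simp only: whitney2_Suc_right[OF assms] lessThan_Suc_atMost diff_Suc_Suc)
  also have "\<dots> = real (Suc n) *
      (\<Sum>i\<le>n. real (n choose i) * real m ^ (n - i) * whitney2 m r i k / real (Suc (n - i)))"
    unfolding sum_distrib_left by (intro sum.cong refl) (simp add: binomial)
  also have "\<dots> = real (Suc n) * ?S"
    by (simp only: whitney2_cauchy_sum[OF assms])
  finally have "whitney2 m r (Suc n) (Suc k) = real (Suc n) / real (Suc k) * ?S"
    by (simp add: field_simps del: of_nat_Suc)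
  then show ?thesis
    by (simp add: sum_distrib_left mult.assoc)
qed

lemma sum_whitney2_shift:
  assumes "1 \<le> k" "k \<le> n"
  shows "(\<Sum>l=k..n. g l * whitney2 m r (l - 1) (k - 1)) = (\<Sum>i<n. g (Suc i) * whitney2 m r i (k - 1))"
proof -
  have "(\<Sum>l=k..n. g l * whitney2 m r (l - 1) (k - 1)) = (\<Sum>l=Suc 0..n. g l * whitney2 m r (l - 1) (k - 1))"
    by (rule sum.mono_neutral_left) (use assms in \<open>auto simp: whitney2_eq_0\<close>)
  also have "\<dots> = (\<Sum>i<n. g (Suc i) * whitney2 m r i (k - 1))"
    by (simp add: sum.atLeast1_atMost_eq)
  finally show ?thesis .
qed

lemma whitney2_diff_eq_sum:
  assumes "m \<ge> 1" "1 \<le> k" "k \<le> n"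
  shows "whitney2 m r n k - real r * whitney2 m r (n - 1) k =
         (\<Sum>l=k..n. real ((n - 1) choose (l - 1)) * real m ^ (n - l) * whitney2 m r (l - 1) (k - 1))"
proof -
  obtain k' n' where k': "k = Suc k'" and n': "n = Suc n'"
    using assms by (metis Suc_le_D One_nat_def)
  have shift: "(\<Sum>l=k..n. real ((n - 1) choose (l - 1)) * real m ^ (n - l) * whitney2 m r (l - 1) (k - 1)) =
        (\<Sum>i<n. real ((n - 1) choose i) * real m ^ (n - Suc i) * whitney2 m r i (k - 1))"
    using sum_whitney2_shift[OF assms(2,3), of "\<lambda>l. real ((n - 1) choose (l - 1)) * real m ^ (n - l)"]
    by simp
  show ?thesis
    unfolding shift using whitney2_Suc_diff[OF assms(1), of r n' k'] by (simp add: k' n' lessThan_Suc_atMost)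
qed

lemma whitney2_mult_eq_sum:
  assumes "m \<ge> 1" "1 \<le> k" "k \<le> n"
  shows "real k * whitney2 m r n k =
         (\<Sum>l=k..n. real (n choose (l - 1)) * real m ^ (n - l) * whitney2 m r (l - 1) (k - 1))"
proof -
  obtain k' where k': "k = Suc k'"
    using assms by (metis Suc_le_D One_nat_def)
  have shift: "(\<Sum>l=k..n. real (n choose (l - 1)) * real m ^ (n - l) * whitney2 m r (l - 1) (k - 1)) =
        (\<Sum>i<n. real (n choose i) * real m ^ (n - Suc i) * whitney2 m r i (k - 1))"
    using sum_whitney2_shift[OF assms(2,3), of "\<lambda>l. real (n choose (l - 1)) * real m ^ (n - l)"]
    by simp
  show ?thesis
    unfolding shift using whitney2_Suc_right[OF assms(1), of k' r n] by (simp add: k')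
qed

theorem mainTheorem18:
  fixes m r :: nat
  assumes "m \<ge> 1"
  shows "(\<forall>n k. whitney2 m r (n+1) (k+1) =
            (\<Sum>j\<le>n. real (n+1) / real (k+1) * real ((k+j) choose j) * cauchy1 j
                      * real m ^ j * whitney2 m r n (k+j))) \<and>
         (\<forall>n k. 1 \<le> n \<longrightarrow> 1 \<le> k \<longrightarrow> k \<le> n \<longrightarrow>
            whitney2 m r n k - real r * whitney2 m r (n-1) k =
            (\<Sum>l=k..n. real ((n-1) choose (l-1)) * real m ^ (n-l) * whitney2 m r (l-1) (k-1))) \<and>
         (\<forall>n k. 1 \<le> n \<longrightarrow> 1 \<le> k \<longrightarrow> k \<le> n \<longrightarrow>
            real k * whitney2 m r n k =
            (\<Sum>l=k..n. real (n choose (l-1)) * real m ^ (n-l) * whitney2 m r (l-1) (k-1)))"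
  using whitney2_Suc_Suc_eq_cauchy_sum[OF assms] whitney2_diff_eq_sum[OF assms]
    whitney2_mult_eq_sum[OF assms]
  by blast

end
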